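(* Let $W=\frac12(x^2-y^2)\partial_x+xy\partial_y$ on $\mathrm{SL}(2,\mathbb R)$. (1) The only $\mathcal N$-invariant $W$-translators are the surfaces $\Sigma_{\theta_0}$. (2) The only $\mathcal A$-invariant $W$-translators are the surfaces $\Sigma_{\theta_0}$. (3) Let $\Sigma$ be a rotational surface whose generating curve $\alpha(s)=(x(s),y(s))$ satisfies $x'=2y\cos\varphi$, $y'=2y\sin\varphi$. If $\Sigma$ is a $W$-translator, then $$\varphi'=(x-2)\cos\varphi-\frac{1}{2y}(x^2-y^2)\sin\varphi.$$
   Context: $\mathrm{SL}(2,\mathbb R)$ is given global coordinates $(x,y,\theta)\in\mathbb R\times(0,\infty)\times\mathbb R$ via $(x,y,\theta)\mapsto \begin{pmatrix}1&x\\0&1\end{pmatrix}\begin{pmatrix}\sqrt y&0\\0&1/\sqrt y\end{pmatrix}\begin{pmatrix}\cos\theta&\sin\theta\\-\sin\theta&\cos\theta\end{pmatrix}$, with the metric $\langle\,,\rangle=\frac{dx^2+dy^2}{4y^2}+\left(d\theta+\frac{dx}{2y}\right)^2$. Orthonormal frame: $e_1=2y\partial_x-\partial_\theta$, $e_2=2y\partial_y$, $e_3=\partial_\theta$; $W=\frac{1}{2y}\big(\frac12(x^2-y^2)e_1+xye_2+\frac12(x^2-y^2)e_3\big)$. A surface with unit normal $N$ and mean curvature $H$ (average of principal curvatures w.r.t. $N$) is a $W$-translator if $H=\langle N,W\rangle$. $\mathcal N$-invariant surfaces: parametrized as $(s,t)\mapsto(t,y(s),\theta(s))$; $N=\frac{y'}{\sqrt2\Phi}(e_1-e_3)+\frac{\sqrt2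 y\theta'}{\Phi}e_2$, $H=\frac{\sqrt2 y^2}{\Phi^3}(\theta'y''-y'\theta''+2y\theta'^3)$, $\Phi=\sqrt{y'^2+2y^2\theta'^2}$. $\mathcal A$-invariant surfaces: parametrized as $(s,t)\mapsto(x(s),t,\theta(s))$, $t>0$; $N=\frac1\Phi(-(x'+2t\theta')e_1+x'e_3)$, $H=\frac{2t^2}{\Phi^3}(x'\theta''-\theta'x'')$, $\Phi=\sqrt{(x'+2t\theta')^2+x'^2}$. Rotational surfaces: parametrized as $(s,t)\mapsto(x(s),y(s),t)$; when $x'=2y\cos\varphi$, $y'=2y\sin\varphi$, $N=-\sin\varphi\,e_1+\cos\varphi\,e_2$ and $H=\frac{\varphi'}{2}+\cos\varphi$. $\Sigma_{\theta_0}=\{\theta=\theta_0\}$ for a constant $\theta_0$. *)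

theory Defs
  imports "HOL-Analysis.Analysis"
begin

text \<open>Tangent vectors are represented by their components (a1,a2,a3) with respect to the
  orthonormal frame e1, e2, e3 of the given left-invariant metric on SL(2,R).
  Since the frame is orthonormal, the metric is the Euclidean dot product of components.\<close>

type_synonym frame_vec = "real \<times> real \<times> real"

definition frame_inner :: "frame_vec \<Rightarrow> frame_vec \<Rightarrow> real" where
  "frame_inner u v = fst u * fst v + fst (snd u) * fst (snd v) + snd (snd u) * snd (snd v)"

text \<open>The field W = (1/2)(x^2-y^2) d/dx + x y d/dy at the point with coordinates (x,y,theta),
  written in the frame: W = (1/(2y)) ((1/2)(x^2-y^2) e1 + x y e2 + (1/2)(x^2-y^2) e3).\<close>

definition W_frame :: "real \<Rightarrow> real \<Rightarrow> frame_vec" where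
  "W_frame x y = ((x\<^sup>2 - y\<^sup>2) / 2 / (2 * y), x * y / (2 * y), (x\<^sup>2 - y\<^sup>2) / 2 / (2 * y))"

subsection \<open>N-invariant surfaces (s,t) \<mapsto> (t, y(s), theta(s))\<close>

definition Phi_N :: "real \<Rightarrow> real \<Rightarrow> real \<Rightarrow> real" where
  "Phi_N y dy dth = sqrt (dy\<^sup>2 + 2 * y\<^sup>2 * dth\<^sup>2)"

definition normal_N :: "real \<Rightarrow> real \<Rightarrow> real \<Rightarrow> frame_vec" where
  "normal_N y dy dth =
     (let P = Phi_N y dy dth in
       (dy / (sqrt 2 * P), sqrt 2 * y * dth / P, - dy / (sqrt 2 * P)))"

definition H_N :: "real \<Rightarrow> real \<Rightarrow> real \<Rightarrow> real \<Rightarrow> real \<Rightarrow> real" where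
  "H_N y dy ddy dth ddth =
     (let P = Phi_N y dy dth in
       sqrt 2 * y\<^sup>2 / P ^ 3 * (dth * ddy - dy * ddth + 2 * y * dth ^ 3))"

definition N_inv_W_translator ::
  "real set \<Rightarrow> (real \<Rightarrow> real) \<Rightarrow> (real \<Rightarrow> real) \<Rightarrow> (real \<Rightarrow> real)
     \<Rightarrow> (real \<Rightarrow> real) \<Rightarrow> (real \<Rightarrow> real) \<Rightarrow> bool" where
  "N_inv_W_translator I y y1 y2 th1 th2 \<longleftrightarrow>
     (\<forall>s\<in>I. \<forall>t::real.
        H_N (y s) (y1 s) (y2 s) (th1 s) (th2 s)
          = frame_inner (normal_N (y s) (y1 s) (th1 s)) (W_frame t (y s)))"

subsection \<open>A-invariant surfaces (s,t) \<mapsto> (x(s), t, theta(s)), t > 0\<close>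

definition Phi_A :: "real \<Rightarrow> real \<Rightarrow> real \<Rightarrow> real" where
  "Phi_A t dx dth = sqrt ((dx + 2 * t * dth)\<^sup>2 + dx\<^sup>2)"

definition normal_A :: "real \<Rightarrow> real \<Rightarrow> real \<Rightarrow> frame_vec" where
  "normal_A t dx dth =
     (let P = Phi_A t dx dth in
       (- (dx + 2 * t * dth) / P, 0, dx / P))"

definition H_A :: "real \<Rightarrow> real \<Rightarrow> real \<Rightarrow> real \<Rightarrow> real \<Rightarrow> real" where
  "H_A t dx ddx dth ddth =
     (let P = Phi_A t dx dth in
       2 * t\<^sup>2 / P ^ 3 * (dx * ddth - dth * ddx))"

definition A_inv_W_translator ::
  "real set \<Rightarrow> (real \<Rightarrow> real) \<Rightarrow> (real \<Rightarrow> real) \<Rightarrow> (real \<Rightarrow> real)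
     \<Rightarrow> (real \<Rightarrow> real) \<Rightarrow> (real \<Rightarrow> real) \<Rightarrow> bool" where
  "A_inv_W_translator I x x1 x2 th1 th2 \<longleftrightarrow>
     (\<forall>s\<in>I. \<forall>t::real. t > 0 \<longrightarrow>
        H_A t (x1 s) (x2 s) (th1 s) (th2 s)
          = frame_inner (normal_A t (x1 s) (th1 s)) (W_frame (x s) t))"

subsection \<open>Rotational surfaces (s,t) \<mapsto> (x(s), y(s), t) with x' = 2y cos phi, y' = 2y sin phi\<close>

definition normal_rot :: "real \<Rightarrow> frame_vec" where
  "normal_rot ph = (- sin ph, cos ph, 0)"

definition H_rot :: "real \<Rightarrow> real \<Rightarrow> real" where
  "H_rot ph dph = dph / 2 + cos ph"

definition rot_W_translator ::
  "real set \<Rightarrow> (real \<Rightarrow> real) \<Rightarrow> (real \<Rightarrow> real) \<Rightarrow> (real \<Rightarrow> real) \<Rightarrow> (real \<Rightarrow> real) \<Rightarrow> bool" where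
  "rot_W_translator I x y ph ph1 \<longleftrightarrow>
     (\<forall>s\<in>I. H_rot (ph s) (ph1 s) = frame_inner (normal_rot (ph s)) (W_frame (x s) (y s)))"

end

theory Submission
  imports Defs
begin

text \<open>For \<open>\<N>\<close>- and \<open>\<A>\<close>-invariant surfaces the mean curvature does not depend on
  the orbit parameter \<open>t\<close>, while \<open>\<langle>N,W\<rangle>\<close> does: it is a nonzero multiple of
  \<open>\<theta>' t\<close>, respectively, after clearing denominators, the translator equation becomes a quartic
  identity in \<open>t\<close> with leading coefficient \<open>-4\<theta>'\<^sup>3\<close>. Either way \<open>\<theta>' = 0\<close>,
  so \<open>\<theta>\<close> is constant on the connected parameter interval; conversely
  \<open>\<theta>' = \<theta>'' = 0\<close> makes both sides vanish. For rotational surfaces the equation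
  \<open>\<phi>'/2 + cos \<phi> = \<langle>N,W\<rangle>\<close> is solved for \<open>\<phi>'\<close>.\<close>

lemma has_real_derivative_0_if_constant_on:
  fixes f :: "real \<Rightarrow> real"
  assumes "open I" "s \<in> I" "f constant_on I" "(f has_real_derivative d) (at s)"
  shows "d = 0"
proof -
  obtain c where "\<forall>u\<in>I. f u = c" using assms(3) unfolding constant_on_def by blast
  then have "((\<lambda>_. c) has_real_derivative d) (at s)"
    using has_field_derivative_transform_within_open[OF assms(4) assms(1,2)] by auto
  then show ?thesis using DERIV_const DERIV_unique by blast
qed

lemma constant_on_iff_condition_forces_derivative_0:
  fixes \<theta> \<theta>1 \<theta>2 :: "real \<Rightarrow> real"
  assumes "open I" "connected I"
    and deriv: "\<And>s. s \<in> I \<Longrightarrow> (\<theta> has_real_derivative \<theta>1 s) (at s) \<and> (\<theta>1 has_real_derivative \<theta>2 s) (at s)"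
    and forces: "\<And>s a b. s \<in> I \<Longrightarrow> Q s a b \<Longrightarrow> a = 0"
    and flat: "\<And>s. s \<in> I \<Longrightarrow> Q s 0 0"
  shows "(\<forall>s\<in>I. Q s (\<theta>1 s) (\<theta>2 s)) \<longleftrightarrow> \<theta> constant_on I"
proof
  assume "\<forall>s\<in>I. Q s (\<theta>1 s) (\<theta>2 s)"
  then have "\<And>s. s \<in> I \<Longrightarrow> (\<theta> has_real_derivative 0) (at s)"
    using deriv forces by metis
  then show "\<theta> constant_on I"
    using has_field_derivative_0_imp_constant_on assms(1,2) by blast
next
  assume "\<theta> constant_on I"
  then have \<theta>1: "\<forall>s\<in>I. \<theta>1 s = 0"
    using has_real_derivative_0_if_constant_on assms(1) deriv by blast
  then have "\<theta>1 constant_on I" unfolding constant_on_def by blast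
  then have "\<forall>s\<in>I. \<theta>2 s = 0"
    using has_real_derivative_0_if_constant_on assms(1) deriv by blast
  with \<theta>1 show "\<forall>s\<in>I. Q s (\<theta>1 s) (\<theta>2 s)" using flat by simp
qed

text \<open>The fourth finite difference annihilates cubics and maps \<open>t\<^sup>4\<close> to 24.\<close>

lemma quartic_vanishing_on_positive_leading_coeff_0:
  fixes a0 a1 a2 a3 a4 :: real
  assumes "\<And>t. t > 0 \<Longrightarrow> a4 * t ^ 4 + a3 * t ^ 3 + a2 * t\<^sup>2 + a1 * t + a0 = 0"
  shows "a4 = 0"
proof -
  define p where "p t = a4 * t ^ 4 + a3 * t ^ 3 + a2 * t\<^sup>2 + a1 * t + a0" for t :: real
  have "p 1 - 4 * p 2 + 6 * p 3 - 4 * p 4 + p 5 = 24 * a4"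
    unfolding p_def by (simp add: algebra_simps)
  moreover have "p t = 0" if "t > 0" for t
    using assms[OF that] unfolding p_def .
  ultimately show ?thesis by simp
qed

lemma Phi_N_pos:
  assumes "y \<noteq> 0" "dth \<noteq> 0"
  shows "Phi_N y dy dth > 0"
  using assms unfolding Phi_N_def by (simp add: add_nonneg_pos)

lemma Phi_A_pos:
  assumes "t \<noteq> 0" "dth \<noteq> 0"
  shows "Phi_A t dx dth > 0"
proof (cases "dx = 0")
  case True
  then show ?thesis using assms unfolding Phi_A_def by simp
next
  case False
  then show ?thesis unfolding Phi_A_def by (simp add: add_nonneg_pos)
qed

lemma inner_normal_N_W_frame:
  assumes "y \<noteq> 0"
  shows "frame_inner (normal_N y dy dth) (W_frame t y) = sqrt 2 * y * dth * t / (2 * Phi_N y dy dth)"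
  using assms unfolding frame_inner_def normal_N_def W_frame_def Let_def by (simp add: field_simps)

lemma inner_normal_A_W_frame:
  assumes "t \<noteq> 0"
  shows "frame_inner (normal_A t dx dth) (W_frame x t) = - dth * (x\<^sup>2 - t\<^sup>2) / (2 * Phi_A t dx dth)"
  using assms unfolding frame_inner_def normal_A_def W_frame_def Let_def
  by (cases "Phi_A t dx dth = 0") (simp_all add: field_simps)

lemma inner_normal_rot_W_frame:
  assumes "y \<noteq> 0"
  shows "frame_inner (normal_rot ph) (W_frame x y) = x / 2 * cos ph - (x\<^sup>2 - y\<^sup>2) / (4 * y) * sin ph"
  using assms unfolding frame_inner_def normal_rot_def W_frame_def by (simp add: field_simps)

text \<open>No regularity of the profile curve is needed: \<open>\<theta>' \<noteq> 0\<close> already makes \<open>\<Phi>\<close> positive.\<close>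

lemma N_translator_equation_imp_dth_0:
  assumes "y \<noteq> 0"
    and "\<forall>t. H_N y dy ddy dth ddth = frame_inner (normal_N y dy dth) (W_frame t y)"
  shows "dth = 0"
proof (rule ccontr)
  assume "dth \<noteq> 0"
  have "frame_inner (normal_N y dy dth) (W_frame 1 y) = frame_inner (normal_N y dy dth) (W_frame 0 y)"
    using assms(2) by metis
  then have "sqrt 2 * y * dth / (2 * Phi_N y dy dth) = 0"
    by (simp add: inner_normal_N_W_frame assms(1))
  moreover have "Phi_N y dy dth > 0" using Phi_N_pos assms(1) \<open>dth \<noteq> 0\<close> .
  ultimately show False using \<open>dth \<noteq> 0\<close> assms(1) by simp
qed

lemma N_translator_equation_dth_0:
  "H_N y dy ddy 0 0 = frame_inner (normal_N y dy 0) (W_frame t y)"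
  unfolding H_N_def frame_inner_def normal_N_def W_frame_def Let_def by simp

lemma A_translator_equation_imp_dth_0:
  assumes "\<forall>t>0. H_A t dx ddx dth ddth = frame_inner (normal_A t dx dth) (W_frame x t)"
  shows "dth = 0"
proof (rule ccontr)
  assume "dth \<noteq> 0"
  define K where "K = dx * ddth - dth * ddx"
  have "(- 4 * dth ^ 3) * t ^ 4 + (- 4 * dx * dth\<^sup>2) * t ^ 3
      + (4 * K + 4 * dth ^ 3 * x\<^sup>2 - 2 * dth * dx\<^sup>2) * t\<^sup>2
      + (4 * dx * dth\<^sup>2 * x\<^sup>2) * t + 2 * dth * dx\<^sup>2 * x\<^sup>2 = 0" if "t > 0" for t
  proof -
    define P where "P = Phi_A t dx dth"
    have P: "P > 0" using Phi_A_pos \<open>t > 0\<close> \<open>dth \<noteq> 0\<close> unfolding P_def by simp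
    have P2: "P\<^sup>2 = (dx + 2 * t * dth)\<^sup>2 + dx\<^sup>2" unfolding P_def Phi_A_def by simp
    have "2 * t\<^sup>2 / P ^ 3 * K = H_A t dx ddx dth ddth"
      unfolding H_A_def K_def P_def Let_def ..
    also have "\<dots> = frame_inner (normal_A t dx dth) (W_frame x t)"
      using assms \<open>t > 0\<close> by blast
    also have "\<dots> = - dth * (x\<^sup>2 - t\<^sup>2) / (2 * P)"
      unfolding P_def using \<open>t > 0\<close> by (simp add: inner_normal_A_W_frame)
    finally have "2 * t\<^sup>2 / P ^ 3 * K = - dth * (x\<^sup>2 - t\<^sup>2) / (2 * P)" .
    then have "4 * t\<^sup>2 * K = - dth * (x\<^sup>2 - t\<^sup>2) * P\<^sup>2"
      using P by (simp add: field_simps power2_eq_square power3_eq_cube)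
    with P2 show ?thesis by (simp add: algebra_simps power2_eq_square power3_eq_cube power4_eq_xxxx)
  qed
  then have "- 4 * dth ^ 3 = 0" by (rule quartic_vanishing_on_positive_leading_coeff_0)
  with \<open>dth \<noteq> 0\<close> show False by simp
qed

lemma A_translator_equation_dth_0:
  "H_A t dx ddx 0 0 = frame_inner (normal_A t dx 0) (W_frame x t)"
  unfolding H_A_def frame_inner_def normal_A_def W_frame_def Let_def by simp

lemma N_inv_W_translator_iff_constant_on:
  assumes "open I" "connected I"
    and "\<And>s. s \<in> I \<Longrightarrow> y s \<noteq> 0"
    and "\<And>s. s \<in> I \<Longrightarrow> (th has_real_derivative th1 s) (at s) \<and> (th1 has_real_derivative th2 s) (at s)"
  shows "N_inv_W_translator I y y1 y2 th1 th2 \<longleftrightarrow> th constant_on I"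
  unfolding N_inv_W_translator_def
proof (rule constant_on_iff_condition_forces_derivative_0[OF assms(1,2,4),
    where Q = "\<lambda>s a b. \<forall>t. H_N (y s) (y1 s) (y2 s) a b = frame_inner (normal_N (y s) (y1 s) a) (W_frame t (y s))"])
  fix s a b
  assume "s \<in> I" "\<forall>t. H_N (y s) (y1 s) (y2 s) a b = frame_inner (normal_N (y s) (y1 s) a) (W_frame t (y s))"
  then show "a = 0" using N_translator_equation_imp_dth_0 assms(3) by blast
qed (simp_all add: N_translator_equation_dth_0)

lemma A_inv_W_translator_iff_constant_on:
  assumes "open I" "connected I"
    and "\<And>s. s \<in> I \<Longrightarrow> (th has_real_derivative th1 s) (at s) \<and> (th1 has_real_derivative th2 s) (at s)"
  shows "A_inv_W_translator I x x1 x2 th1 th2 \<longleftrightarrow> th constant_on I"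
  unfolding A_inv_W_translator_def
proof (rule constant_on_iff_condition_forces_derivative_0[OF assms,
    where Q = "\<lambda>s a b. \<forall>t>0. H_A t (x1 s) (x2 s) a b = frame_inner (normal_A t (x1 s) a) (W_frame (x s) t)"])
  fix s a b
  assume "\<forall>t>0. H_A t (x1 s) (x2 s) a b = frame_inner (normal_A t (x1 s) a) (W_frame (x s) t)"
  then show "a = 0" by (rule A_translator_equation_imp_dth_0)
qed (simp_all add: A_translator_equation_dth_0)

lemma rot_W_translator_angle_equation:
  assumes "rot_W_translator I x y ph ph1" "s \<in> I" "y s \<noteq> 0"
  shows "ph1 s = (x s - 2) * cos (ph s) - 1 / (2 * y s) * ((x s)\<^sup>2 - (y s)\<^sup>2) * sin (ph s)"
proof -
  have "ph1 s / 2 + cos (ph s) = x s / 2 * cos (ph s) - ((x s)\<^sup>2 - (y s)\<^sup>2) / (4 * y s) * sin (ph s)"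
    using assms unfolding rot_W_translator_def H_rot_def by (simp add: inner_normal_rot_W_frame)
  then show ?thesis using assms(3) by (simp add: field_simps)
qed

theorem mainTheorem5:
  shows
  "(\<forall>(I::real set) y y1 y2 th th1 th2.
      open I \<and> connected I \<and>
      (\<forall>s\<in>I. y s > 0 \<and> (y1 s \<noteq> 0 \<or> th1 s \<noteq> 0) \<and>
         (y has_real_derivative y1 s) (at s) \<and> (y1 has_real_derivative y2 s) (at s) \<and>
         (th has_real_derivative th1 s) (at s) \<and> (th1 has_real_derivative th2 s) (at s))
      \<longrightarrow> (N_inv_W_translator I y y1 y2 th1 th2 \<longleftrightarrow> (\<exists>th0. \<forall>s\<in>I. th s = th0)))
   \<and>
   (\<forall>(I::real set) x x1 x2 th th1 th2.
      open I \<and> connected I \<and>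
      (\<forall>s\<in>I. (x1 s \<noteq> 0 \<or> th1 s \<noteq> 0) \<and>
         (x has_real_derivative x1 s) (at s) \<and> (x1 has_real_derivative x2 s) (at s) \<and>
         (th has_real_derivative th1 s) (at s) \<and> (th1 has_real_derivative th2 s) (at s))
      \<longrightarrow> (A_inv_W_translator I x x1 x2 th1 th2 \<longleftrightarrow> (\<exists>th0. \<forall>s\<in>I. th s = th0)))
   \<and>
   (\<forall>(I::real set) x y ph ph1.
      open I \<and>
      (\<forall>s\<in>I. y s > 0 \<and>
         (x has_real_derivative 2 * y s * cos (ph s)) (at s) \<and>
         (y has_real_derivative 2 * y s * sin (ph s)) (at s) \<and>
         (ph has_real_derivative ph1 s) (at s))
      \<longrightarrow> rot_W_translator I x y ph ph1
      \<longrightarrow> (\<forall>s\<in>I. ph1 s = (x s - 2) * cos (ph s) - 1 / (2 * y s) * ((x s)\<^sup>2 - (y s)\<^sup>2) * sin (ph s)))"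
  unfolding constant_on_def[symmetric]
proof (intro conjI allI impI, goal_cases)
  case (1 I y y1 y2 th th1 th2)
  then show ?case by (intro N_inv_W_translator_iff_constant_on) (simp_all, fastforce)
next
  case (2 I x x1 x2 th th1 th2)
  then show ?case by (intro A_inv_W_translator_iff_constant_on) simp_all
next
  case (3 I x y ph ph1)
  show ?case
  proof
    fix s assume "s \<in> I"
    with 3 have "y s \<noteq> 0" by fastforce
    with 3(2) \<open>s \<in> I\<close> show "ph1 s = (x s - 2) * cos (ph s) - 1 / (2 * y s) * ((x s)\<^sup>2 - (y s)\<^sup>2) * sin (ph s)"
      by (rule rot_W_translator_angle_equation)
  qed
qed

end
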